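(* Let $f$ be a DNF with $k$ terms and let $y\in\{0,1\}^n$ satisfy $f_{>\tau}$ and not $f_{\le\tau}$ ($\tau=1000k$). Fix any permutation $\pi$ and let $z_0,z_1,\dots$ be the sweep process started at $y$. If $(z_i)_a=y_a$ for all $a\in P(y)$, $T$ is a term in $\mathcal{T}_f(z_i)$, and $j\in[n]$ satisfies $(z_i)_j\neq y_j$, then neither $x_j$ nor $\overline{x_j}$ appears in $T$.
   Context: Terms are sets of literals, a DNF is a set of terms; $g_{\le L}$ / $g_{>L}$ are the sub-DNFs of terms of length $\le L$ / $>L$. $\mathcal{T}_f(x)$ is the set of terms of $f$ satisfied by $x$. Protected set $P(y)$: for each term $T\in f$ not satisfied by $y$, take the literal of $T$ with smallest index $i\in[n]$ not satisfied by $y$; $P(y)$ is the set of these indices. Sweep process: given $y$ with $f(y)=1$ and a permutation $\pi$ listing $[n]$ as $\pi(0),\dots,\pi(n-1)$, $z_0=y$, and $z_{i+1}=z_i^{\oplus\pi(i)}$ if $f(z_i^{\oplus\pi(i)})=1$, else $z_{i+1}=z_i$ ($x^{\oplus j}$ is $x$ with bit $j$ flipped). *)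

theory Defs
  imports Main
begin

(* Variables are indexed by [n] = {0..<n}; a point of {0,1}^n is a function nat => bool
   (values at indices >= n are irrelevant).  A literal is a pair (i, b): the literal x_i
   if b = True, the negated literal (not x_i) if b = False. *)

type_synonym lit = "nat \<times> bool"
type_synonym dterm = "lit set"
type_synonym dnf = "dterm set"

definition lit_sat :: "lit \<Rightarrow> (nat \<Rightarrow> bool) \<Rightarrow> bool" where
  "lit_sat l x \<longleftrightarrow> x (fst l) = snd l"

definition term_sat :: "dterm \<Rightarrow> (nat \<Rightarrow> bool) \<Rightarrow> bool" where
  "term_sat T x \<longleftrightarrow> (\<forall>l\<in>T. lit_sat l x)"

definition dnf_eval :: "dnf \<Rightarrow> (nat \<Rightarrow> bool) \<Rightarrow> bool" where
  "dnf_eval f x \<longleftrightarrow> (\<exists>T\<in>f. term_sat T x)"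

definition wf_dnf :: "nat \<Rightarrow> dnf \<Rightarrow> bool" where
  "wf_dnf n f \<longleftrightarrow> finite f \<and> (\<forall>T\<in>f. finite T \<and> (\<forall>l\<in>T. fst l < n))"

definition dnf_le :: "dnf \<Rightarrow> nat \<Rightarrow> dnf" where
  "dnf_le g L = {T \<in> g. card T \<le> L}"

definition dnf_gt :: "dnf \<Rightarrow> nat \<Rightarrow> dnf" where
  "dnf_gt g L = {T \<in> g. card T > L}"

definition sat_terms :: "dnf \<Rightarrow> (nat \<Rightarrow> bool) \<Rightarrow> dnf" where
  "sat_terms f x = {T \<in> f. term_sat T x}"

definition protected_set :: "dnf \<Rightarrow> (nat \<Rightarrow> bool) \<Rightarrow> nat set" where
  "protected_set f y =
     {LEAST i. \<exists>b. (i, b) \<in> T \<and> \<not> lit_sat (i, b) y | T. T \<in> f \<and> \<not> term_sat T y}"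

definition flip :: "(nat \<Rightarrow> bool) \<Rightarrow> nat \<Rightarrow> (nat \<Rightarrow> bool)" where
  "flip x j = x(j := \<not> x j)"

fun sweep :: "dnf \<Rightarrow> (nat \<Rightarrow> nat) \<Rightarrow> (nat \<Rightarrow> bool) \<Rightarrow> nat \<Rightarrow> (nat \<Rightarrow> bool)" where
  "sweep f pi y 0 = y"
| "sweep f pi y (Suc i) =
     (let z = sweep f pi y i; z' = flip z (pi i) in if dnf_eval f z' then z' else z)"

end

theory Submission
  imports Defs
begin

(* A term T satisfied by z_i but not by y contains a literal falsified by y, and the one of
   smallest index lies in P(y), where z_i agrees with y; so T would be falsified by z_i too.
   Hence T is satisfied by both y and z_i, and since these differ at j, T mentions no literal
   on x_j. *)

lemma protected_set_meets_unsat_term: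
  assumes "T \<in> f" "\<not> term_sat T y"
  obtains a b where "a \<in> protected_set f y" "(a, b) \<in> T" "y a \<noteq> b"
proof -
  define a where "a = (LEAST i. \<exists>b. (i, b) \<in> T \<and> \<not> lit_sat (i, b) y)"
  have "\<exists>i b. (i, b) \<in> T \<and> \<not> lit_sat (i, b) y"
    using assms(2) unfolding term_sat_def by auto
  then have "\<exists>b. (a, b) \<in> T \<and> \<not> lit_sat (a, b) y"
    unfolding a_def by (rule LeastI_ex)
  moreover have "a \<in> protected_set f y"
    unfolding protected_set_def a_def using assms by blast
  ultimately show ?thesis
    using that unfolding lit_sat_def by auto
qed

lemma term_sat_if_agrees_on_protected_set:
  assumes "T \<in> f" "term_sat T z" "\<forall>a\<in>protected_set f y. z a = y a"
  shows "term_sat T y"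
proof (rule ccontr)
  assume "\<not> term_sat T y"
  then obtain a b where "a \<in> protected_set f y" "(a, b) \<in> T" "y a \<noteq> b"
    by (rule protected_set_meets_unsat_term[OF assms(1)])
  moreover have "z a = b"
    using assms(2) \<open>(a, b) \<in> T\<close> unfolding term_sat_def lit_sat_def by fastforce
  ultimately show False
    using assms(3) by simp
qed

lemma lit_notin_term_if_sat_disagree:
  assumes "term_sat T x" "term_sat T y" "x j \<noteq> y j"
  shows "(j, b) \<notin> T"
  using assms unfolding term_sat_def lit_sat_def by fastforce

theorem corollary4p5:
  fixes n :: nat and f :: dnf and y :: "nat \<Rightarrow> bool" and pi :: "nat \<Rightarrow> nat"
    and i j :: nat and T :: dterm
  assumes wf: "wf_dnf n f"
    and k: "k = card f"
    and tau: "\<tau> = 1000 * k"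
    and y_gt: "dnf_eval (dnf_gt f \<tau>) y"
    and y_le: "\<not> dnf_eval (dnf_le f \<tau>) y"
    and pi: "bij_betw pi {0..<n} {0..<n}"
    and i: "i \<le> n"
    and prot: "\<forall>a\<in>protected_set f y. sweep f pi y i a = y a"
    and T: "T \<in> sat_terms f (sweep f pi y i)"
    and j: "j < n" "sweep f pi y i j \<noteq> y j"
  shows "(j, True) \<notin> T \<and> (j, False) \<notin> T"
proof -
  have "T \<in> f" and T_sat_z: "term_sat T (sweep f pi y i)"
    using T by (auto simp: sat_terms_def)
  then have "term_sat T y"
    using prot by (rule term_sat_if_agrees_on_protected_set)
  then show ?thesis
    using T_sat_z j(2) lit_notin_term_if_sat_disagree by metis
qed

end
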